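(* Let $p$ be a prime, $d\geq3$ odd, $n\geq2$, $q=p^f$ with $f\in\{1,2,\ldots\}\cup\{\infty\}$ (convention $p^\infty=0$, $f\geq2$ if $p=2$), and let $G=\langle x_1,\ldots,x_d\mid r_0\rangle$ be a one-relator pro-$p$ group (minimal presentation) with $r_0=x_1^q[x_1,{}_n\,x_2][x_2,x_3][x_4,x_5]\cdots[x_{d-1},x_d]\cdot s$, where $s\in S''$ and $S$ is the closed subgroup generated by $x_3,\ldots,x_d$. Then every defined $3$-fold Massey product in $H^\bullet(G,\mathbb{F}_p)$ vanishes if and only if $q\neq3$.
   Context: Commutators $[x,y]=x^{-1}y^{-1}xy$, $[y,{}_k x]$ left-normed; $H''$ is the closed commutator subgroup of $H'$. For $\psi_1,\ldots,\psi_m\in H^1(G,\mathbb{F}_p)=\mathrm{Hom}(G,\mathbb{F}_p)$, $\langle\psi_1,\ldots,\psi_m\rangle\subseteq H^2(G,\mathbb{F}_p)$ is the standard $m$-fold Massey product; it is defined if nonempty and vanishes if it contains $0$. Equivalently, with $\mathbb{U}_{m+1}$ the upper unitriangular $(m+1)\times(m+1)$ matrices over $\mathbb{F}_p$ and $Z$ its center: defined iff there is a continuous homomorphism $G\to\mathbb{U}_{m+1}/Z$ with $(i,i+1)$-entries $\psi_i$, and vanishing iff there is a continuous homomorphism $G\to\mathbb{U}_{m+1}$ with $(i,i+1)$-entries $\psi_i$. *)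

theory Defs
  imports "HOL-Algebra.Algebra" "HOL-Library.Extended_Nat"
begin

text \<open>Universe of carriers: all finite groups below have carriers inside the (infinite)
type mat of integer matrices indexed by nat; every finite group has an isomorphic copy there.\<close>

type_synonym mat = "nat \<Rightarrow> nat \<Rightarrow> int"

definition fin_p_group :: "nat \<Rightarrow> 'a monoid \<Rightarrow> bool" where
  "fin_p_group p P \<longleftrightarrow> group P \<and> finite (carrier P) \<and> (\<exists>k. card (carrier P) = p ^ k)"

text \<open>Elements of the free pro-p group on x_1..x_d, realised as implicit operations:
families of evaluations on all finite p-groups, natural w.r.t. homomorphisms.\<close>

type_synonym proword = "mat monoid \<Rightarrow> (nat \<Rightarrow> mat) \<Rightarrow> mat"

definition free_pro_p :: "nat \<Rightarrow> nat \<Rightarrow> proword set" where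
  "free_pro_p p d = {w.
     (\<forall>P g. fin_p_group p P \<and> g \<in> {1..d} \<rightarrow> carrier P \<longrightarrow> w P g \<in> carrier P) \<and>
     (\<forall>P g g'. fin_p_group p P \<and> g \<in> {1..d} \<rightarrow> carrier P \<and> (\<forall>i\<in>{1..d}. g i = g' i)
         \<longrightarrow> w P g = w P g') \<and>
     (\<forall>P Q h g. fin_p_group p P \<and> fin_p_group p Q \<and> h \<in> hom P Q \<and> g \<in> {1..d} \<rightarrow> carrier P
         \<longrightarrow> h (w P g) = w Q (h \<circ> g))}"

text \<open>s lies in S'' (S = closed subgroup generated by x_3..x_d) iff its image under every
homomorphism to a finite p-group lies in the second derived subgroup of the image of S.\<close>

definition S2 :: "nat \<Rightarrow> nat \<Rightarrow> proword set" where
  "S2 p d = {w \<in> free_pro_p p d. \<forall>P g. fin_p_group p P \<and> g \<in> {1..d} \<rightarrow> carrier P \<longrightarrow>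
       w P g \<in> derived P (derived P (generate P (g ` {3..d})))}"

definition comm :: "('a, 'b) monoid_scheme \<Rightarrow> 'a \<Rightarrow> 'a \<Rightarrow> 'a" where
  "comm P x y = inv\<^bsub>P\<^esub> x \<otimes>\<^bsub>P\<^esub> inv\<^bsub>P\<^esub> y \<otimes>\<^bsub>P\<^esub> x \<otimes>\<^bsub>P\<^esub> y"

fun itcomm :: "('a, 'b) monoid_scheme \<Rightarrow> 'a \<Rightarrow> 'a \<Rightarrow> nat \<Rightarrow> 'a" where
  "itcomm P y x 0 = y"
| "itcomm P y x (Suc k) = comm P (itcomm P y x k) x"

definition oprod :: "('a, 'b) monoid_scheme \<Rightarrow> 'a list \<Rightarrow> 'a" where
  "oprod P xs = foldr (\<lambda>a b. a \<otimes>\<^bsub>P\<^esub> b) xs \<one>\<^bsub>P\<^esub>"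

definition qexp :: "nat \<Rightarrow> enat \<Rightarrow> nat" where
  "qexp p f = (case f of enat k \<Rightarrow> p ^ k | \<infinity> \<Rightarrow> 0)"

definition relator :: "nat \<Rightarrow> nat \<Rightarrow> enat \<Rightarrow> nat \<Rightarrow> proword \<Rightarrow> mat monoid \<Rightarrow> (nat \<Rightarrow> mat) \<Rightarrow> mat" where
  "relator p d f n s P g =
     (g 1 [^]\<^bsub>P\<^esub> qexp p f) \<otimes>\<^bsub>P\<^esub> itcomm P (g 1) (g 2) n \<otimes>\<^bsub>P\<^esub> comm P (g 2) (g 3)
     \<otimes>\<^bsub>P\<^esub> oprod P (map (\<lambda>i. comm P (g (2*i)) (g (2*i+1))) [2..<(d+1) div 2])
     \<otimes>\<^bsub>P\<^esub> s P g"

text \<open>Continuous homomorphisms G = <x_1..x_d | r_0> \<rightarrow> P (P a finite p-group), given by the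
images g i of the generators x_i.\<close>
definition pres_hom :: "nat \<Rightarrow> nat \<Rightarrow> enat \<Rightarrow> nat \<Rightarrow> proword \<Rightarrow> mat monoid \<Rightarrow> (nat \<Rightarrow> mat) \<Rightarrow> bool" where
  "pres_hom p d f n s P g \<longleftrightarrow> g \<in> {1..d} \<rightarrow> carrier P \<and> relator p d f n s P g = \<one>\<^bsub>P\<^esub>"

text \<open>F_p (additive), element a encoded as the constant matrix a.\<close>
definition Fp_grp :: "nat \<Rightarrow> mat monoid" where
  "Fp_grp p = \<lparr>carrier = (\<lambda>a. \<lambda>_ _. a) ` {0..<int p},
               monoid.mult = (\<lambda>x y. \<lambda>_ _. (x 0 0 + y 0 0) mod int p),
               monoid.one = (\<lambda>_ _. 0)\<rparr>"

definition unitri4 :: "nat \<Rightarrow> mat set" where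
  "unitri4 p = {M. \<forall>i j. (i < 4 \<and> j < 4 \<longrightarrow>
        (if i = j then M i j = 1 else if j < i then M i j = 0 else M i j \<in> {0..<int p}))
      \<and> (\<not> (i < 4 \<and> j < 4) \<longrightarrow> M i j = 0)}"

definition matmul4 :: "nat \<Rightarrow> mat \<Rightarrow> mat \<Rightarrow> mat" where
  "matmul4 p M N = (\<lambda>i j. if i < 4 \<and> j < 4 then (\<Sum>k<4. M i k * N k j) mod int p else 0)"

definition id4 :: mat where
  "id4 = (\<lambda>i j. if i = j \<and> i < 4 then 1 else 0)"

definition U4 :: "nat \<Rightarrow> mat monoid" where
  "U4 p = \<lparr>carrier = unitri4 p, monoid.mult = matmul4 p, monoid.one = id4\<rparr>"

text \<open>U_4/Z, Z = centre = {I + c E_{14}}: each coset M Z is represented by its unique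
element with (1,4)-entry 0 (entry (0,3) here); multiplication of cosets.\<close>
definition U4Z :: "nat \<Rightarrow> mat monoid" where
  "U4Z p = \<lparr>carrier = {M \<in> unitri4 p. M 0 3 = 0},
            monoid.mult = (\<lambda>M N. (matmul4 p M N)(0 := (matmul4 p M N 0)(3 := 0))),
            monoid.one = id4\<rparr>"

text \<open>rho(x_j) has (i,i+1)-entry psi_i(x_j), i = 1,2,3 (0-indexed entry (i-1,i)).\<close>
definition entries_match :: "nat \<Rightarrow> (nat \<Rightarrow> nat \<Rightarrow> mat) \<Rightarrow> (nat \<Rightarrow> mat) \<Rightarrow> bool" where
  "entries_match d \<psi> g \<longleftrightarrow> (\<forall>j\<in>{1..d}. \<forall>i\<in>{1..3}. g j (i - 1) i = \<psi> i j 0 0)"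

end

theory Submission
  imports Defs
begin

(* Write an element of U4 = U_4(F_p) by its superdiagonal (a, b, c), its second diagonal (x, y)
   and its corner z.
   U4 is metabelian, so s evaluates trivially, and all commutators in r_0 lie in the abelian
   subgroup a = b = c = 0.  Hence for any lift g_1, ..., g_d to U4 of a solution in U4/Z, r_0
   evaluates to g_1^q times a central element whose corner is a polynomial in the entries.
   If q <> 3 then g^q = 1 in U4.  If moreover some g_j (j >= 2) has a nonzero (1,2) or (3,4)
   entry, changing the (1,3) and (2,4) entries of its partner in [x_2i, x_2i+1] shifts that
   corner by an arbitrary amount, so it can be made 0; otherwise all commutators vanish anyway.
   If q = 3, then p = 3 and x_1 -> I + E_12 + E_23 + E_34, x_j -> I (j >= 2) solves r_0 in U4/Z,
   while every lift sends r_0 to g_1^3 = I + E_14. *)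

section \<open>Coordinates on upper unitriangular matrices\<close>

(* Indices start at 0: entry (i, j) here is entry (i + 1, j + 1) in the usual notation. *)
definition upper4 :: "int \<Rightarrow> int \<Rightarrow> int \<Rightarrow> int \<Rightarrow> int \<Rightarrow> int \<Rightarrow> mat" where
  "upper4 a b c x y z = (\<lambda>i j. if i < 4 \<and> j < 4 then
     (if i = j then 1 else if i = 0 \<and> j = 1 then a else if i = 1 \<and> j = 2 then b
      else if i = 2 \<and> j = 3 then c else if i = 0 \<and> j = 2 then x
      else if i = 1 \<and> j = 3 then y else if i = 0 \<and> j = 3 then z else 0) else 0)"

definition umat :: "nat \<Rightarrow> int \<Rightarrow> int \<Rightarrow> int \<Rightarrow> int \<Rightarrow> int \<Rightarrow> int \<Rightarrow> mat" where
  "umat p a b c x y z = upper4 (a mod p) (b mod p) (c mod p) (x mod p) (y mod p) (z mod p)"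

lemma upper4_eq_iff:
  "upper4 a b c x y z = upper4 a' b' c' x' y' z' \<longleftrightarrow>
     a = a' \<and> b = b' \<and> c = c' \<and> x = x' \<and> y = y' \<and> z = z'"
proof
  assume "upper4 a b c x y z = upper4 a' b' c' x' y' z'"
  then have "\<And>i j. upper4 a b c x y z i j = upper4 a' b' c' x' y' z' i j" by simp
  from this[of 0 1] this[of 1 2] this[of 2 3] this[of 0 2] this[of 1 3] this[of 0 3]
  show "a = a' \<and> b = b' \<and> c = c' \<and> x = x' \<and> y = y' \<and> z = z'" by (simp add: upper4_def)
qed simp

(* Stated with Suc 0, since the simplifier rewrites the numeral 1 :: nat to Suc 0. *)
lemma umat_entries [simp]:
  "umat p a b c x y z 0 (Suc 0) = a mod p" "umat p a b c x y z (Suc 0) 2 = b mod p"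
  "umat p a b c x y z 2 3 = c mod p" "umat p a b c x y z 0 2 = x mod p"
  "umat p a b c x y z (Suc 0) 3 = y mod p" "umat p a b c x y z 0 3 = z mod p"
  by (simp_all add: umat_def upper4_def)

lemma umat_eq_iff:
  "umat p a b c x y z = umat p a' b' c' x' y' z' \<longleftrightarrow>
     a mod p = a' mod p \<and> b mod p = b' mod p \<and> c mod p = c' mod p \<and>
     x mod p = x' mod p \<and> y mod p = y' mod p \<and> z mod p = z' mod p"
  by (simp add: umat_def upper4_eq_iff)

lemma unitri4_entry_range: "M \<in> unitri4 p \<Longrightarrow> i < j \<Longrightarrow> j < 4 \<Longrightarrow> M i j \<in> {0..<int p}"
  unfolding unitri4_def by (auto dest!: spec2[of _ i j])

lemma unitri4_entry_dvd_eq_0: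
  "M \<in> unitri4 p \<Longrightarrow> i < j \<Longrightarrow> j < 4 \<Longrightarrow> int p dvd M i j \<Longrightarrow> M i j = 0"
  using unitri4_entry_range[of M p i j] by (auto simp: dvd_eq_mod_eq_0)

lemma umat_in_unitri4:
  assumes "p \<ge> 2"
  shows "umat p a b c x y z \<in> unitri4 p"
  unfolding unitri4_def
proof (intro CollectI allI conjI impI)
  fix i j :: nat
  assume "i < 4 \<and> j < 4"
  then have "i = 0 \<or> i = 1 \<or> i = 2 \<or> i = 3" "j = 0 \<or> j = 1 \<or> j = 2 \<or> j = 3" by auto
  then show "if i = j then umat p a b c x y z i j = 1 else if j < i then umat p a b c x y z i j = 0
      else umat p a b c x y z i j \<in> {0..<int p}"
    using assms by (elim disjE) (simp_all add: umat_def upper4_def)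
next
  fix i j :: nat
  assume "\<not> (i < 4 \<and> j < 4)"
  then show "umat p a b c x y z i j = 0" unfolding umat_def upper4_def by (rule if_not_P)
qed

lemma umat_superdiag:
  "k < 3 \<Longrightarrow> umat p a b c x y z k (Suc k) = (if k = 0 then a else if k = 1 then b else c) mod p"
  by (auto simp: umat_def upper4_def less_Suc_eq numeral_3_eq_3)

lemma unitri4_eq_umat:
  assumes "M \<in> unitri4 p"
  shows "M = umat p (M 0 1) (M 1 2) (M 2 3) (M 0 2) (M 1 3) (M 0 3)"
    and "M 0 1 \<in> {0..<int p}" "M 1 2 \<in> {0..<int p}" "M 2 3 \<in> {0..<int p}"
    and "M 0 2 \<in> {0..<int p}" "M 1 3 \<in> {0..<int p}" "M 0 3 \<in> {0..<int p}"
proof -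
  have M: "\<And>i j. (i < 4 \<and> j < 4 \<longrightarrow>
        (if i = j then M i j = 1 else if j < i then M i j = 0 else M i j \<in> {0..<int p}))
      \<and> (\<not> (i < 4 \<and> j < 4) \<longrightarrow> M i j = 0)"
    using assms unfolding unitri4_def by blast
  show range: "M 0 1 \<in> {0..<int p}" "M 1 2 \<in> {0..<int p}" "M 2 3 \<in> {0..<int p}"
    "M 0 2 \<in> {0..<int p}" "M 1 3 \<in> {0..<int p}" "M 0 3 \<in> {0..<int p}"
    using unitri4_entry_range[OF assms] by simp_all
  show "M = umat p (M 0 1) (M 1 2) (M 2 3) (M 0 2) (M 1 3) (M 0 3)"
  proof (intro ext)
    fix i j :: nat
    show "M i j = umat p (M 0 1) (M 1 2) (M 2 3) (M 0 2) (M 1 3) (M 0 3) i j"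
    proof (cases "i < 4 \<and> j < 4")
      case True
      then have "i = 0 \<or> i = 1 \<or> i = 2 \<or> i = 3" "j = 0 \<or> j = 1 \<or> j = 2 \<or> j = 3" by auto
      then show ?thesis using range M[of i j] by (elim disjE) (simp_all add: umat_def upper4_def)
    next
      case False
      then have "umat p (M 0 1) (M 1 2) (M 2 3) (M 0 2) (M 1 3) (M 0 3) i j = 0"
        unfolding umat_def upper4_def by (rule if_not_P)
      moreover have "M i j = 0" using conjunct2[OF M[of i j]] False by (rule mp)
      ultimately show ?thesis by simp
    qed
  qed
qed

lemma matmul4_upper4:
  assumes "p \<ge> 2"
  shows "matmul4 p (upper4 a b c x y z) (upper4 a' b' c' x' y' z') =
    upper4 ((a + a') mod p) ((b + b') mod p) ((c + c') mod p) ((x + x' + a * b') mod p)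
      ((y + y' + b * c') mod p) ((z + z' + a * y' + x * c') mod p)"
proof (intro ext)
  fix i j :: nat
  have [simp]: "1 mod int p = 1" using assms by simp
  show "matmul4 p (upper4 a b c x y z) (upper4 a' b' c' x' y' z') i j =
    upper4 ((a + a') mod p) ((b + b') mod p) ((c + c') mod p) ((x + x' + a * b') mod p)
      ((y + y' + b * c') mod p) ((z + z' + a * y' + x * c') mod p) i j"
  proof (cases "i < 4 \<and> j < 4")
    case True
    then have "i = 0 \<or> i = 1 \<or> i = 2 \<or> i = 3" "j = 0 \<or> j = 1 \<or> j = 2 \<or> j = 3" by auto
    then show ?thesis unfolding matmul4_def upper4_def
      by (elim disjE) (simp_all add: lessThan_nat_numeral algebra_simps)
  next
    case False
    then show ?thesis unfolding matmul4_def upper4_def by (simp only: if_False)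
  qed
qed

lemma matmul4_umat:
  assumes "p \<ge> 2"
  shows "matmul4 p (umat p a b c x y z) (umat p a' b' c' x' y' z') =
    umat p (a + a') (b + b') (c + c') (x + x' + a * b') (y + y' + b * c') (z + z' + a * y' + x * c')"
  unfolding umat_def matmul4_upper4[OF assms] upper4_eq_iff
  by (intro conjI mod_add_cong mod_mult_cong) simp_all

lemma U4_carrier [simp]: "carrier (U4 p) = unitri4 p"
  by (simp add: U4_def)

lemma U4_one: "\<one>\<^bsub>U4 p\<^esub> = umat p 0 0 0 0 0 0"
  by (simp add: U4_def id4_def umat_def upper4_def fun_eq_iff)

lemma U4_mult:
  "p \<ge> 2 \<Longrightarrow> umat p a b c x y z \<otimes>\<^bsub>U4 p\<^esub> umat p a' b' c' x' y' z' =
    umat p (a + a') (b + b') (c + c') (x + x' + a * b') (y + y' + b * c') (z + z' + a * y' + x * c')"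
  by (simp add: U4_def matmul4_umat)

lemma U4_carrierE:
  assumes "M \<in> carrier (U4 p)"
  obtains a b c x y z where "M = umat p a b c x y z"
  using assms by (intro that[OF unitri4_eq_umat(1)]) simp

lemma U4_inv_left:
  "p \<ge> 2 \<Longrightarrow> umat p (- a) (- b) (- c) (a * b - x) (b * c - y) (a * y + x * c - z - a * b * c)
     \<otimes>\<^bsub>U4 p\<^esub> umat p a b c x y z = \<one>\<^bsub>U4 p\<^esub>"
  by (simp add: U4_mult U4_one umat_eq_iff algebra_simps)

lemma group_U4:
  assumes "p \<ge> 2"
  shows "group (U4 p)"
proof (rule groupI)
  fix M N assume "M \<in> carrier (U4 p)" "N \<in> carrier (U4 p)"
  then show "M \<otimes>\<^bsub>U4 p\<^esub> N \<in> carrier (U4 p)"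
    using assms by (elim U4_carrierE) (simp add: U4_mult umat_in_unitri4)
next
  show "\<one>\<^bsub>U4 p\<^esub> \<in> carrier (U4 p)"
    using assms by (simp add: U4_one umat_in_unitri4)
next
  fix M N L assume "M \<in> carrier (U4 p)" "N \<in> carrier (U4 p)" "L \<in> carrier (U4 p)"
  then show "M \<otimes>\<^bsub>U4 p\<^esub> N \<otimes>\<^bsub>U4 p\<^esub> L = M \<otimes>\<^bsub>U4 p\<^esub> (N \<otimes>\<^bsub>U4 p\<^esub> L)"
    using assms by (elim U4_carrierE) (simp add: U4_mult umat_eq_iff algebra_simps)
next
  fix M assume "M \<in> carrier (U4 p)"
  then show "\<one>\<^bsub>U4 p\<^esub> \<otimes>\<^bsub>U4 p\<^esub> M = M"
    using assms by (elim U4_carrierE) (simp add: U4_mult U4_one)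
next
  fix M assume "M \<in> carrier (U4 p)"
  then show "\<exists>N\<in>carrier (U4 p). N \<otimes>\<^bsub>U4 p\<^esub> M = \<one>\<^bsub>U4 p\<^esub>"
    using assms U4_inv_left by (elim U4_carrierE) (metis U4_carrier umat_in_unitri4)
qed

lemma U4_inv:
  assumes "p \<ge> 2"
  shows "inv\<^bsub>U4 p\<^esub> umat p a b c x y z =
    umat p (- a) (- b) (- c) (a * b - x) (b * c - y) (a * y + x * c - z - a * b * c)"
  using group.inv_equality[OF group_U4 U4_inv_left] assms by (simp add: umat_in_unitri4)

lemma U4_comm_umat:
  assumes "p \<ge> 2"
  shows "comm (U4 p) (umat p a b c x y z) (umat p a' b' c' x' y' z') =
    umat p 0 0 0 (a * b' - a' * b) (b * c' - b' * c)
      (a * y' + x * c' - a' * y - x' * c - (a + a') * (b * c' - b' * c))"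
  using assms unfolding comm_def by (simp add: U4_inv U4_mult umat_eq_iff) (simp add: algebra_simps)

lemma U4_pow_umat:
  assumes "p \<ge> 2"
  shows "umat p a b c x y z [^]\<^bsub>U4 p\<^esub> k =
    umat p (int k * a) (int k * b) (int k * c) (int k * x + int (k choose 2) * a * b)
      (int k * y + int (k choose 2) * b * c)
      (int k * z + int (k choose 2) * (a * y + x * c) + int (k choose 3) * a * b * c)"
proof (induction k)
  case 0
  then show ?case by (simp add: U4_one umat_eq_iff binomial_eq_0)
next
  case (Suc k)
  have "Suc k choose 2 = (k choose 2) + k" "Suc k choose 3 = (k choose 3) + (k choose 2)"
    by (simp_all add: numeral_2_eq_2 numeral_3_eq_3)
  with Suc assms show ?case by (simp add: U4_mult umat_eq_iff) (simp add: algebra_simps)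
qed

section \<open>U4/Z and F_p as quotients of U4\<close>

lemma group_surj_hom_image:
  assumes "group G" and "h \<in> hom G H" and "h ` carrier G = carrier H" and "h \<one>\<^bsub>G\<^esub> = \<one>\<^bsub>H\<^esub>"
  shows "group H"
  using group.hom_imp_img_group[OF assms(1,2)] assms(3,4) by simp

definition drop_corner :: "mat \<Rightarrow> mat" where
  "drop_corner M = M(0 := (M 0)(3 := 0))"

lemma drop_corner_apply [simp]: "drop_corner M i j = (if i = 0 \<and> j = 3 then 0 else M i j)"
  by (simp add: drop_corner_def)

lemma drop_corner_umat: "drop_corner (umat p a b c x y z) = umat p a b c x y 0"
  by (simp add: fun_eq_iff umat_def upper4_def)

lemma U4Z_carrier: "carrier (U4Z p) = {M \<in> unitri4 p. M 0 3 = 0}"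
  by (simp add: U4Z_def)

lemma U4Z_one: "\<one>\<^bsub>U4Z p\<^esub> = umat p 0 0 0 0 0 0"
  by (simp add: U4Z_def U4_one[symmetric] U4_def)

lemma U4Z_carrier_subset: "carrier (U4Z p) \<subseteq> carrier (U4 p)"
  by (auto simp: U4Z_carrier)

lemma drop_corner_U4Z: "M \<in> carrier (U4Z p) \<Longrightarrow> drop_corner M = M"
  by (simp add: U4Z_carrier fun_eq_iff)

lemma U4Z_mult: "M \<otimes>\<^bsub>U4Z p\<^esub> N = drop_corner (M \<otimes>\<^bsub>U4 p\<^esub> N)"
  by (simp add: U4Z_def U4_def drop_corner_def)

lemma drop_corner_hom:
  assumes "p \<ge> 2"
  shows "drop_corner \<in> hom (U4 p) (U4Z p)"
proof (rule homI)
  fix M assume "M \<in> carrier (U4 p)"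
  then show "drop_corner M \<in> carrier (U4Z p)"
    using assms by (elim U4_carrierE) (simp add: drop_corner_umat U4Z_carrier umat_in_unitri4)
next
  fix M N assume "M \<in> carrier (U4 p)" "N \<in> carrier (U4 p)"
  then show "drop_corner (M \<otimes>\<^bsub>U4 p\<^esub> N) = drop_corner M \<otimes>\<^bsub>U4Z p\<^esub> drop_corner N"
    using assms by (elim U4_carrierE) (simp add: U4Z_mult U4_mult drop_corner_umat)
qed

lemma group_U4Z:
  assumes "p \<ge> 2"
  shows "group (U4Z p)"
proof (rule group_surj_hom_image[OF group_U4[OF assms] drop_corner_hom[OF assms]])
  have "M \<in> drop_corner ` carrier (U4 p)" if "M \<in> carrier (U4Z p)" for M
    using that drop_corner_U4Z U4Z_carrier_subset by (metis rev_image_eqI subsetD)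
  then show "drop_corner ` carrier (U4 p) = carrier (U4Z p)"
    using hom_in_carrier[OF drop_corner_hom[OF assms]] by auto
  show "drop_corner \<one>\<^bsub>U4 p\<^esub> = \<one>\<^bsub>U4Z p\<^esub>"
    by (simp add: U4_one U4Z_one drop_corner_umat)
qed

definition superdiag_entry :: "nat \<Rightarrow> mat \<Rightarrow> mat" where
  "superdiag_entry k M = (\<lambda>_ _. M k (Suc k))"

lemma Fp_carrier: "carrier (Fp_grp p) = (\<lambda>a. \<lambda>_ _. a) ` {0..<int p}"
  by (simp add: Fp_grp_def)

lemma Fp_one: "\<one>\<^bsub>Fp_grp p\<^esub> = (\<lambda>_ _. 0)"
  by (simp add: Fp_grp_def)

lemma superdiag_entry_hom:
  assumes "p \<ge> 2" and "k < 3"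
  shows "superdiag_entry k \<in> hom (U4 p) (Fp_grp p)"
proof (rule homI)
  fix M assume "M \<in> carrier (U4 p)"
  then have "M k (Suc k) \<in> {0..<int p}"
    using assms(2) by (intro unitri4_entry_range) simp_all
  then show "superdiag_entry k M \<in> carrier (Fp_grp p)"
    unfolding superdiag_entry_def Fp_carrier by blast
next
  fix M N assume "M \<in> carrier (U4 p)" "N \<in> carrier (U4 p)"
  then show "superdiag_entry k (M \<otimes>\<^bsub>U4 p\<^esub> N) = superdiag_entry k M \<otimes>\<^bsub>Fp_grp p\<^esub> superdiag_entry k N"
    using assms
    by (elim U4_carrierE) (simp add: superdiag_entry_def U4_mult Fp_grp_def umat_superdiag mod_simps)
qed

lemma group_Fp:
  assumes "p \<ge> 2"
  shows "group (Fp_grp p)"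
proof (rule group_surj_hom_image[OF group_U4[OF assms] superdiag_entry_hom[OF assms, of 0]])
  show "superdiag_entry 0 ` carrier (U4 p) = carrier (Fp_grp p)"
  proof
    show "superdiag_entry 0 ` carrier (U4 p) \<subseteq> carrier (Fp_grp p)"
      using hom_in_carrier[OF superdiag_entry_hom[OF assms, of 0]] by auto
    show "carrier (Fp_grp p) \<subseteq> superdiag_entry 0 ` carrier (U4 p)"
    proof
      fix A assume "A \<in> carrier (Fp_grp p)"
      then obtain a where "A = (\<lambda>_ _. a)" "a \<in> {0..<int p}" by (auto simp: Fp_carrier)
      then have "A = superdiag_entry 0 (umat p a 0 0 0 0 0)" by (simp add: superdiag_entry_def umat_superdiag)
      then show "A \<in> superdiag_entry 0 ` carrier (U4 p)" using assms umat_in_unitri4 by auto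
    qed
  qed
  show "superdiag_entry 0 \<one>\<^bsub>U4 p\<^esub> = \<one>\<^bsub>Fp_grp p\<^esub>"
    by (simp add: U4_one Fp_one superdiag_entry_def umat_superdiag)
qed simp

lemma fin_p_groupI:
  assumes "group P" and "card (carrier P) = p ^ k" and "p > 0"
  shows "fin_p_group p P"
  using assms card_ge_0_finite[of "carrier P"] unfolding fin_p_group_def by auto

lemma U4_carrier_eq_image:
  assumes "p \<ge> 2"
  shows "carrier (U4 p) = (\<lambda>(a, b, c, x, y, z). umat p a b c x y z) `
    ({0..<int p} \<times> {0..<int p} \<times> {0..<int p} \<times> {0..<int p} \<times> {0..<int p} \<times> {0..<int p})"
    (is "_ = ?image")
proof
  show "carrier (U4 p) \<subseteq> ?image"
  proof
    fix M assume "M \<in> carrier (U4 p)"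
    then show "M \<in> ?image"
      using unitri4_eq_umat[of M p]
      by (intro rev_image_eqI[of "(M 0 1, M 1 2, M 2 3, M 0 2, M 1 3, M 0 3)"]) auto
  qed
qed (use umat_in_unitri4[OF assms] in auto)

lemma fin_p_group_U4:
  assumes "p \<ge> 2"
  shows "fin_p_group p (U4 p)"
proof (rule fin_p_groupI[OF group_U4[OF assms]])
  let ?I = "{0..<int p}"
  have "inj_on (\<lambda>(a, b, c, x, y, z). umat p a b c x y z) (?I \<times> ?I \<times> ?I \<times> ?I \<times> ?I \<times> ?I)"
    by (auto simp: inj_on_def umat_eq_iff)
  then show "card (carrier (U4 p)) = p ^ 6"
    unfolding U4_carrier_eq_image[OF assms]
    by (simp add: card_image card_cartesian_product eval_nat_numeral)
qed (use assms in simp)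

lemma U4Z_carrier_eq_image:
  assumes "p \<ge> 2"
  shows "carrier (U4Z p) = (\<lambda>(a, b, c, x, y). umat p a b c x y 0) `
    ({0..<int p} \<times> {0..<int p} \<times> {0..<int p} \<times> {0..<int p} \<times> {0..<int p})"
    (is "_ = ?image")
proof
  show "carrier (U4Z p) \<subseteq> ?image"
  proof
    fix M assume "M \<in> carrier (U4Z p)"
    then show "M \<in> ?image"
      using unitri4_eq_umat[of M p] unfolding U4Z_carrier
      by (intro rev_image_eqI[of "(M 0 1, M 1 2, M 2 3, M 0 2, M 1 3)"]) auto
  qed
qed (use umat_in_unitri4[OF assms] in \<open>auto simp: U4Z_carrier\<close>)

lemma fin_p_group_U4Z:
  assumes "p \<ge> 2"
  shows "fin_p_group p (U4Z p)"
proof (rule fin_p_groupI[OF group_U4Z[OF assms]])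
  let ?I = "{0..<int p}"
  have "inj_on (\<lambda>(a, b, c, x, y). umat p a b c x y 0) (?I \<times> ?I \<times> ?I \<times> ?I \<times> ?I)"
    by (auto simp: inj_on_def umat_eq_iff)
  then show "card (carrier (U4Z p)) = p ^ 5"
    unfolding U4Z_carrier_eq_image[OF assms]
    by (simp add: card_image card_cartesian_product eval_nat_numeral)
qed (use assms in simp)

lemma fin_p_group_Fp:
  assumes "p \<ge> 2"
  shows "fin_p_group p (Fp_grp p)"
proof (rule fin_p_groupI[OF group_Fp[OF assms]])
  have "inj_on (\<lambda>a. \<lambda>_ _. a) {0..<int p}"
    by (auto simp: inj_on_def fun_eq_iff)
  then show "card (carrier (Fp_grp p)) = p ^ 1"
    unfolding Fp_carrier card_image[OF \<open>inj_on _ _\<close>] by simp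
qed (use assms in simp)

lemma oprod_Nil [simp]: "oprod P [] = \<one>\<^bsub>P\<^esub>"
  and oprod_Cons [simp]: "oprod P (x # xs) = x \<otimes>\<^bsub>P\<^esub> oprod P xs"
  by (simp_all add: oprod_def)

context group
begin

lemma comm_closed [intro, simp]: "x \<in> carrier G \<Longrightarrow> y \<in> carrier G \<Longrightarrow> comm G x y \<in> carrier G"
  by (simp add: comm_def)

lemma itcomm_closed [intro, simp]: "x \<in> carrier G \<Longrightarrow> y \<in> carrier G \<Longrightarrow> itcomm G x y k \<in> carrier G"
  by (induction k) simp_all

lemma oprod_closed [intro, simp]: "set xs \<subseteq> carrier G \<Longrightarrow> oprod G xs \<in> carrier G"
  by (induction xs) simp_all

end

context group_hom
begin

lemma hom_comm: "x \<in> carrier G \<Longrightarrow> y \<in> carrier G \<Longrightarrow> h (comm G x y) = comm H (h x) (h y)"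
  by (simp add: comm_def)

lemma hom_itcomm: "x \<in> carrier G \<Longrightarrow> y \<in> carrier G \<Longrightarrow> h (itcomm G x y k) = itcomm H (h x) (h y) k"
  by (induction k) (simp_all add: hom_comm)

lemma hom_oprod: "set xs \<subseteq> carrier G \<Longrightarrow> h (oprod G xs) = oprod H (map h xs)"
  by (induction xs) simp_all

end

lemma relator_hom:
  assumes P: "fin_p_group p P" and Q: "fin_p_group p Q" and h: "h \<in> hom P Q"
    and g: "g \<in> {1..d} \<rightarrow> carrier P" and s: "s \<in> free_pro_p p d" and "d \<ge> 3"
  shows "h (relator p d f n s P g) = relator p d f n s Q (h \<circ> g)"
proof -
  interpret group_hom P Q h
    using P Q h by (simp add: fin_p_group_def group_hom_def group_hom_axioms_def)
  let ?pairs = "map (\<lambda>i. comm P (g (2 * i)) (g (2 * i + 1))) [2..<(d + 1) div 2]"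
  have "g (2 * i) \<in> carrier P" "g (2 * i + 1) \<in> carrier P" if "i \<in> set [2..<(d + 1) div 2]" for i
    using g that by auto
  then have pairs: "set ?pairs \<subseteq> carrier P"
    "map h ?pairs = map (\<lambda>i. comm Q ((h \<circ> g) (2 * i)) ((h \<circ> g) (2 * i + 1))) [2..<(d + 1) div 2]"
    by (auto simp: hom_comm)
  then have pairs_hom: "h (oprod P ?pairs) =
      oprod Q (map (\<lambda>i. comm Q ((h \<circ> g) (2 * i)) ((h \<circ> g) (2 * i + 1))) [2..<(d + 1) div 2])"
    by (simp only: hom_oprod)
  have "g 1 \<in> carrier P" "g 2 \<in> carrier P" "g 3 \<in> carrier P"
    using g \<open>d \<ge> 3\<close> by auto
  moreover have "s P g \<in> carrier P" and "h (s P g) = s Q (h \<circ> g)"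
    using s P Q h g unfolding free_pro_p_def by blast+
  ultimately show ?thesis
    unfolding relator_def using pairs(1) by (simp add: pairs_hom[simplified] hom_comm hom_itcomm hom_nat_pow)
qed

lemma relator_cong:
  assumes "fin_p_group p P" and "g \<in> {1..d} \<rightarrow> carrier P" and "\<forall>i\<in>{1..d}. g i = g' i"
    and "s \<in> free_pro_p p d" and "d \<ge> 3"
  shows "relator p d f n s P g = relator p d f n s P g'"
proof -
  have "s P g = s P g'" using assms(1-4) unfolding free_pro_p_def by blast
  moreover have "g 1 = g' 1" "g 2 = g' 2" "g 3 = g' 3" using assms(3,5) by auto
  moreover have "oprod P (map (\<lambda>i. comm P (g (2 * i)) (g (2 * i + 1))) [2..<(d + 1) div 2]) =
      oprod P (map (\<lambda>i. comm P (g' (2 * i)) (g' (2 * i + 1))) [2..<(d + 1) div 2])"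
    using assms(3) by (intro arg_cong[where f = "oprod P"] map_cong) auto
  ultimately show ?thesis unfolding relator_def by simp
qed

section \<open>U4 is metabelian\<close>

definition zero_superdiag :: "nat \<Rightarrow> mat set" where
  "zero_superdiag p = {M \<in> unitri4 p. M 0 1 = 0 \<and> M 1 2 = 0 \<and> M 2 3 = 0}"

lemma zero_superdiagE:
  assumes "M \<in> zero_superdiag p"
  obtains x y z where "M = umat p 0 0 0 x y z"
  using assms unitri4_eq_umat(1)[of M p] unfolding zero_superdiag_def by force

lemma umat_in_zero_superdiag: "p \<ge> 2 \<Longrightarrow> umat p 0 0 0 x y z \<in> zero_superdiag p"
  by (simp add: zero_superdiag_def umat_in_unitri4)

lemma subgroup_zero_superdiag:
  assumes "p \<ge> 2"
  shows "subgroup (zero_superdiag p) (U4 p)"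
proof (rule group.subgroupI[OF group_U4[OF assms]])
  show "zero_superdiag p \<subseteq> carrier (U4 p)" by (auto simp: zero_superdiag_def)
  show "zero_superdiag p \<noteq> {}" using umat_in_zero_superdiag[OF assms] by blast
next
  fix M assume "M \<in> zero_superdiag p"
  then show "inv\<^bsub>U4 p\<^esub> M \<in> zero_superdiag p"
    using assms by (elim zero_superdiagE) (simp add: U4_inv umat_in_zero_superdiag)
next
  fix M N assume "M \<in> zero_superdiag p" "N \<in> zero_superdiag p"
  then show "M \<otimes>\<^bsub>U4 p\<^esub> N \<in> zero_superdiag p"
    using assms by (elim zero_superdiagE) (simp add: U4_mult umat_in_zero_superdiag)
qed

lemma U4_metabelian:
  assumes "p \<ge> 2" and "H \<subseteq> carrier (U4 p)"
  shows "derived (U4 p) (derived (U4 p) H) = {\<one>\<^bsub>U4 p\<^esub>}"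
proof -
  interpret group "U4 p" using group_U4[OF assms(1)] .
  have "derived_set (U4 p) H \<subseteq> zero_superdiag p"
  proof
    fix M assume "M \<in> derived_set (U4 p) H"
    then obtain A B where "A \<in> carrier (U4 p)" "B \<in> carrier (U4 p)"
      and "M = A \<otimes>\<^bsub>U4 p\<^esub> B \<otimes>\<^bsub>U4 p\<^esub> inv\<^bsub>U4 p\<^esub> A \<otimes>\<^bsub>U4 p\<^esub> inv\<^bsub>U4 p\<^esub> B"
      using assms(2) by blast
    then show "M \<in> zero_superdiag p"
      using assms(1) by (elim U4_carrierE) (simp add: U4_inv U4_mult zero_superdiag_def umat_in_unitri4)
  qed
  then have "derived (U4 p) H \<subseteq> zero_superdiag p"
    unfolding derived_def using generate_subgroup_incl subgroup_zero_superdiag[OF assms(1)] by blast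
  have "derived_set (U4 p) (derived (U4 p) H) \<subseteq> {\<one>\<^bsub>U4 p\<^esub>}"
  proof
    fix M assume "M \<in> derived_set (U4 p) (derived (U4 p) H)"
    then obtain A B where "A \<in> zero_superdiag p" "B \<in> zero_superdiag p"
      and "M = A \<otimes>\<^bsub>U4 p\<^esub> B \<otimes>\<^bsub>U4 p\<^esub> inv\<^bsub>U4 p\<^esub> A \<otimes>\<^bsub>U4 p\<^esub> inv\<^bsub>U4 p\<^esub> B"
      using \<open>derived (U4 p) H \<subseteq> zero_superdiag p\<close> by blast
    then show "M \<in> {\<one>\<^bsub>U4 p\<^esub>}"
      using assms(1) by (elim zero_superdiagE) (simp add: U4_inv U4_mult U4_one umat_eq_iff)
  qed
  then have "derived (U4 p) (derived (U4 p) H) \<subseteq> {\<one>\<^bsub>U4 p\<^esub>}"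
    unfolding derived_def[of _ "derived (U4 p) H"] using generate_subgroup_incl triv_subgroup by blast
  then show ?thesis
    using derived_is_subgroup[OF derived_in_carrier[OF assms(2)]] subgroup.one_closed by blast
qed

lemma S2_U4_trivial:
  assumes "p \<ge> 2" and "s \<in> S2 p d" and "h \<in> {1..d} \<rightarrow> carrier (U4 p)"
  shows "s (U4 p) h = \<one>\<^bsub>U4 p\<^esub>"
proof -
  have "generate (U4 p) (h ` {3..d}) \<subseteq> carrier (U4 p)"
    using assms(3) by (intro group.generate_incl[OF group_U4[OF assms(1)]]) auto
  then show ?thesis
    using assms fin_p_group_U4[OF assms(1)] U4_metabelian[OF assms(1)] unfolding S2_def by blast
qed

(* The relator is computed on integer representatives K and reduced mod p only at the end,
   which keeps all coordinate formulas polynomial. *)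
definition unitri_mod :: "nat \<Rightarrow> mat \<Rightarrow> mat" where
  "unitri_mod p M = umat p (M 0 1) (M 1 2) (M 2 3) (M 0 2) (M 1 3) (M 0 3)"

lemma unitri_mod_in_carrier: "p \<ge> 2 \<Longrightarrow> unitri_mod p M \<in> carrier (U4 p)"
  by (simp add: unitri_mod_def umat_in_unitri4)

lemma unitri_mod_carrier: "M \<in> carrier (U4 p) \<Longrightarrow> unitri_mod p M = M"
  unfolding unitri_mod_def using unitri4_eq_umat(1) by simp

definition comm13 :: "mat \<Rightarrow> mat \<Rightarrow> int" where
  "comm13 A B = A 0 1 * B 1 2 - B 0 1 * A 1 2"

definition comm24 :: "mat \<Rightarrow> mat \<Rightarrow> int" where
  "comm24 A B = A 1 2 * B 2 3 - B 1 2 * A 2 3"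

definition comm14 :: "mat \<Rightarrow> mat \<Rightarrow> int" where
  "comm14 A B = A 0 1 * B 1 3 + A 0 2 * B 2 3 - B 0 1 * A 1 3 - B 0 2 * A 2 3
     - (A 0 1 + B 0 1) * (A 1 2 * B 2 3 - B 1 2 * A 2 3)"

lemma U4_comm_unitri_mod:
  "p \<ge> 2 \<Longrightarrow> comm (U4 p) (unitri_mod p A) (unitri_mod p B) =
     umat p 0 0 0 (comm13 A B) (comm24 A B) (comm14 A B)"
  unfolding unitri_mod_def comm13_def comm24_def comm14_def
  by (simp add: U4_comm_umat umat_eq_iff algebra_simps)

lemma U4_comm_zero_superdiag:
  "p \<ge> 2 \<Longrightarrow> comm (U4 p) (umat p 0 0 0 u v w) (unitri_mod p B) =
     umat p 0 0 0 0 0 (u * B 2 3 - B 0 1 * v)"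
  unfolding unitri_mod_def by (simp add: U4_comm_umat umat_eq_iff algebra_simps)

lemma U4_itcomm_unitri_mod:
  assumes "p \<ge> 2" and "k \<ge> 2"
  shows "itcomm (U4 p) (unitri_mod p A) (unitri_mod p B) k =
    umat p 0 0 0 0 0 (if k = 2 then comm13 A B * B 2 3 - B 0 1 * comm24 A B else 0)"
  using assms(2)
proof (induction k rule: dec_induct)
  case base
  show ?case using assms(1) by (simp add: numeral_2_eq_2 U4_comm_unitri_mod U4_comm_zero_superdiag)
next
  case (step k)
  then show ?case using assms(1) by (simp add: U4_comm_zero_superdiag)
qed

lemma U4_oprod_zero_superdiag:
  "p \<ge> 2 \<Longrightarrow> oprod (U4 p) (map (\<lambda>i. umat p 0 0 0 (u i) (v i) (w i)) xs) =
     umat p 0 0 0 (\<Sum>i\<leftarrow>xs. u i) (\<Sum>i\<leftarrow>xs. v i) (\<Sum>i\<leftarrow>xs. w i)"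
  by (induction xs) (simp_all add: U4_one U4_mult)

definition pair_comm_sum :: "(mat \<Rightarrow> mat \<Rightarrow> int) \<Rightarrow> nat \<Rightarrow> (nat \<Rightarrow> mat) \<Rightarrow> int" where
  "pair_comm_sum \<phi> d K = (\<Sum>i = 1..<(d + 1) div 2. \<phi> (K (2 * i)) (K (2 * i + 1)))"

(* [x_1, n x_2] is central for n = 2 and trivial for n >= 3. *)
definition itcomm_corner :: "nat \<Rightarrow> (nat \<Rightarrow> mat) \<Rightarrow> int" where
  "itcomm_corner n K =
     (if n = 2 then comm13 (K 1) (K 2) * K 2 2 3 - K 2 0 1 * comm24 (K 1) (K 2) else 0)"

lemma U4_relator_pairs:
  assumes "p \<ge> 2" and "d \<ge> 3"
  shows "comm (U4 p) (unitri_mod p (K 2)) (unitri_mod p (K 3)) \<otimes>\<^bsub>U4 p\<^esub>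
      oprod (U4 p) (map (\<lambda>i. comm (U4 p) (unitri_mod p (K (2 * i))) (unitri_mod p (K (2 * i + 1))))
        [2..<(d + 1) div 2]) =
    umat p 0 0 0 (pair_comm_sum comm13 d K) (pair_comm_sum comm24 d K) (pair_comm_sum comm14 d K)"
proof -
  have "1 < (d + 1) div 2" using assms(2) by simp
  then have "[1..<(d + 1) div 2] = 1 # [2..<(d + 1) div 2]"
    by (simp add: upt_conv_Cons numeral_2_eq_2)
  then have "comm (U4 p) (unitri_mod p (K 2)) (unitri_mod p (K 3)) \<otimes>\<^bsub>U4 p\<^esub>
      oprod (U4 p) (map (\<lambda>i. comm (U4 p) (unitri_mod p (K (2 * i))) (unitri_mod p (K (2 * i + 1))))
        [2..<(d + 1) div 2]) =
      oprod (U4 p) (map (\<lambda>i. comm (U4 p) (unitri_mod p (K (2 * i))) (unitri_mod p (K (2 * i + 1))))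
        [1..<(d + 1) div 2])"
    by (simp add: numeral_3_eq_3)
  also have "\<dots> =
      umat p 0 0 0 (pair_comm_sum comm13 d K) (pair_comm_sum comm24 d K) (pair_comm_sum comm14 d K)"
    unfolding pair_comm_sum_def U4_comm_unitri_mod[OF assms(1)] U4_oprod_zero_superdiag[OF assms(1)]
      interv_sum_list_conv_sum_set_nat set_upt ..
  finally show ?thesis .
qed

lemma U4_relator:
  assumes "p \<ge> 2" and "d \<ge> 3" and "n \<ge> 2" and "s \<in> S2 p d"
  shows "relator p d f n s (U4 p) (\<lambda>j. unitri_mod p (K j)) =
    unitri_mod p (K 1) [^]\<^bsub>U4 p\<^esub> qexp p f \<otimes>\<^bsub>U4 p\<^esub>
    umat p 0 0 0 (pair_comm_sum comm13 d K) (pair_comm_sum comm24 d K)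
      (itcomm_corner n K + pair_comm_sum comm14 d K)"
proof -
  interpret group "U4 p" using group_U4[OF assms(1)] .
  let ?h = "\<lambda>j. unitri_mod p (K j)"
  let ?pairs = "oprod (U4 p) (map (\<lambda>i. comm (U4 p) (?h (2 * i)) (?h (2 * i + 1))) [2..<(d + 1) div 2])"
  have h_closed: "?h j \<in> carrier (U4 p)" for j
    by (rule unitri_mod_in_carrier[OF assms(1)])
  have s: "s (U4 p) ?h = \<one>\<^bsub>U4 p\<^esub>"
    by (intro S2_U4_trivial[OF assms(1,4)] Pi_I h_closed)
  have "?pairs \<in> carrier (U4 p)"
    using h_closed by (intro oprod_closed) (auto simp del: U4_carrier)
  moreover have "?h 1 [^]\<^bsub>U4 p\<^esub> qexp p f \<in> carrier (U4 p)"
    "itcomm (U4 p) (?h 1) (?h 2) n \<in> carrier (U4 p)" "comm (U4 p) (?h 2) (?h 3) \<in> carrier (U4 p)"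
    using h_closed by (simp_all del: U4_carrier)
  moreover have "\<And>A B C D. A \<in> carrier (U4 p) \<Longrightarrow> B \<in> carrier (U4 p) \<Longrightarrow> C \<in> carrier (U4 p) \<Longrightarrow>
      D \<in> carrier (U4 p) \<Longrightarrow> A \<otimes>\<^bsub>U4 p\<^esub> B \<otimes>\<^bsub>U4 p\<^esub> C \<otimes>\<^bsub>U4 p\<^esub> D \<otimes>\<^bsub>U4 p\<^esub> \<one>\<^bsub>U4 p\<^esub> =
      A \<otimes>\<^bsub>U4 p\<^esub> (B \<otimes>\<^bsub>U4 p\<^esub> (C \<otimes>\<^bsub>U4 p\<^esub> D))"
    by (simp add: m_assoc del: U4_carrier)
  ultimately have "relator p d f n s (U4 p) ?h = ?h 1 [^]\<^bsub>U4 p\<^esub> qexp p f \<otimes>\<^bsub>U4 p\<^esub>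
      (itcomm (U4 p) (?h 1) (?h 2) n \<otimes>\<^bsub>U4 p\<^esub> (comm (U4 p) (?h 2) (?h 3) \<otimes>\<^bsub>U4 p\<^esub> ?pairs))"
    unfolding relator_def s by blast
  also have "\<dots> = ?h 1 [^]\<^bsub>U4 p\<^esub> qexp p f \<otimes>\<^bsub>U4 p\<^esub>
      umat p 0 0 0 (pair_comm_sum comm13 d K) (pair_comm_sum comm24 d K)
        (itcomm_corner n K + pair_comm_sum comm14 d K)"
    unfolding U4_relator_pairs[OF assms(1,2)] itcomm_corner_def U4_itcomm_unitri_mod[OF assms(1,3)]
    using assms(1) by (simp add: U4_mult)
  finally show ?thesis .
qed

lemma relator_U4_unitri_mod:
  assumes "p \<ge> 2" and "d \<ge> 3" and "s \<in> S2 p d" and "h \<in> {1..d} \<rightarrow> carrier (U4 p)"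
  shows "relator p d f n s (U4 p) h = relator p d f n s (U4 p) (\<lambda>j. unitri_mod p (h j))"
proof (rule relator_cong[OF fin_p_group_U4[OF assms(1)] assms(4)])
  show "\<forall>j\<in>{1..d}. h j = unitri_mod p (h j)"
    using assms(4) unitri_mod_carrier by (metis PiE)
qed (use assms(2,3) in \<open>simp_all add: S2_def\<close>)

lemma relator_U4_eq_pow:
  assumes "p \<ge> 2" and "d \<ge> 3" and "n \<ge> 2" and "s \<in> S2 p d" and "h \<in> {1..d} \<rightarrow> carrier (U4 p)"
    and "\<forall>j\<in>{2..d}. h j 0 1 = 0 \<and> h j 2 3 = 0"
  shows "relator p d f n s (U4 p) h = h 1 [^]\<^bsub>U4 p\<^esub> qexp p f"
proof -
  interpret group "U4 p" using group_U4[OF assms(1)] .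
  have "h (2 * i) 0 1 = 0" "h (2 * i) 2 3 = 0" "h (2 * i + 1) 0 1 = 0" "h (2 * i + 1) 2 3 = 0"
    if "i \<in> {1..<(d + 1) div 2}" for i
    using assms(6) that by auto
  then have "pair_comm_sum comm13 d h = 0" "pair_comm_sum comm24 d h = 0" "pair_comm_sum comm14 d h = 0"
    by (auto simp: pair_comm_sum_def comm13_def comm24_def comm14_def intro!: sum.neutral)
  moreover have "itcomm_corner n h = 0"
    using assms(2,6) by (simp add: itcomm_corner_def comm13_def comm24_def)
  moreover have "h 1 \<in> carrier (U4 p)" using assms(2,5) by auto
  ultimately show ?thesis
    using assms unfolding relator_U4_unitri_mod[OF assms(1,2,4,5)]
    by (simp add: U4_relator unitri_mod_carrier U4_one[symmetric] del: U4_carrier)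
qed

lemma drop_corner_relator:
  assumes "p \<ge> 2" and "d \<ge> 3" and "s \<in> S2 p d" and "g \<in> {1..d} \<rightarrow> carrier (U4Z p)"
  shows "drop_corner (relator p d f n s (U4 p) g) = relator p d f n s (U4Z p) g"
proof -
  have s: "s \<in> free_pro_p p d" using assms(3) by (simp add: S2_def)
  have "g \<in> {1..d} \<rightarrow> carrier (U4 p)" using assms(4) U4Z_carrier_subset by blast
  then have "drop_corner (relator p d f n s (U4 p) g) = relator p d f n s (U4Z p) (drop_corner \<circ> g)"
    by (rule relator_hom[OF fin_p_group_U4[OF assms(1)] fin_p_group_U4Z[OF assms(1)]
          drop_corner_hom[OF assms(1)] _ s assms(2)])
  also have "\<dots> = relator p d f n s (U4Z p) g"
    using assms(4) drop_corner_U4Z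
    by (intro relator_cong[OF fin_p_group_U4Z[OF assms(1)] _ _ s assms(2), symmetric]) (auto simp: Pi_iff)
  finally show ?thesis .
qed

section \<open>Exponent of U4\<close>

lemma U4_pow_eq_one:
  assumes "p \<ge> 2" and "M \<in> carrier (U4 p)"
    and "p dvd e" and "p dvd (e choose 2)" and "p dvd (e choose 3)"
  shows "M [^]\<^bsub>U4 p\<^esub> e = \<one>\<^bsub>U4 p\<^esub>"
proof -
  have "int p dvd int e" "int p dvd int (e choose 2)" "int p dvd int (e choose 3)"
    using assms(3-5) by simp_all
  with assms(1,2) show ?thesis
    by (elim U4_carrierE) (simp add: U4_pow_umat U4_one umat_eq_iff mod_eq_0_iff_dvd mult.assoc)
qed

(* U4 has exponent 4, 9 or p according as p = 2, p = 3 or p >= 5. *)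
lemma qexp_exponent_divisor:
  assumes "Factorial_Ring.prime p" and "f \<ge> 1" and "p = 2 \<longrightarrow> f \<ge> 2" and "qexp p f \<noteq> 3"
  obtains e where "e dvd qexp p f" and "p dvd e" and "p dvd (e choose 2)" and "p dvd (e choose 3)"
proof (cases f)
  case infinity
  then show ?thesis by (intro that[of 0]) (simp_all add: qexp_def binomial_eq_0)
next
  case (enat k)
  then have q: "qexp p f = p ^ k" and "k \<ge> 1" using assms(2) by (simp_all add: qexp_def one_enat_def)
  have "\<not> Factorial_Ring.prime (4::nat)"
    by (auto simp: prime_nat_iff intro!: exI[of _ 2])
  then have "p = 2 \<or> p = 3 \<or> p \<ge> 5"
    using prime_ge_2_nat[OF assms(1)] assms(1) by (cases "p = 4") auto
  then consider "p = 2" | "p = 3" | "p \<ge> 5" by blast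
  then show ?thesis
  proof cases
    case 1
    then have "k \<ge> 2" using assms(3) enat by (simp add: numeral_eq_enat)
    then have "(2::nat) ^ 2 dvd 2 ^ k" by (rule le_imp_power_dvd)
    moreover have "(4::nat) choose 2 = 6" "(4::nat) choose 3 = 4" by (simp_all add: eval_nat_numeral)
    ultimately show ?thesis using 1 q by (intro that[of 4]) simp_all
  next
    case 2
    then have "k \<ge> 2" using assms(4) q \<open>k \<ge> 1\<close> by (cases "k = 1") simp_all
    then have "(3::nat) ^ 2 dvd 3 ^ k" by (rule le_imp_power_dvd)
    moreover have "(9::nat) choose 2 = 36" "(9::nat) choose 3 = 84" by (simp_all add: eval_nat_numeral)
    ultimately show ?thesis using 2 q by (intro that[of 9]) simp_all
  next
    case 3
    then have "p dvd (p choose 2)" "p dvd (p choose 3)"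
      using assms(1) by (simp_all add: dvd_choose_prime)
    then show ?thesis using q \<open>k \<ge> 1\<close> by (intro that[of p]) simp_all
  qed
qed

lemma U4_pow_qexp:
  assumes "Factorial_Ring.prime p" and "f \<ge> 1" and "p = 2 \<longrightarrow> f \<ge> 2" and "qexp p f \<noteq> 3"
    and "M \<in> carrier (U4 p)"
  shows "M [^]\<^bsub>U4 p\<^esub> qexp p f = \<one>\<^bsub>U4 p\<^esub>"
proof -
  have p: "p \<ge> 2" using prime_ge_2_nat[OF assms(1)] .
  interpret group "U4 p" using group_U4[OF p] .
  obtain e where "e dvd qexp p f" "M [^]\<^bsub>U4 p\<^esub> e = \<one>\<^bsub>U4 p\<^esub>"
    using qexp_exponent_divisor[OF assms(1-4)] U4_pow_eq_one[OF p assms(5)] by metis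
  then show ?thesis using assms(5) by (auto simp: nat_pow_pow[symmetric] simp del: U4_carrier)
qed

lemma relator_U4_coords:
  assumes "Factorial_Ring.prime p" and "d \<ge> 3" and "n \<ge> 2" and "f \<ge> 1" and "p = 2 \<longrightarrow> f \<ge> 2"
    and "s \<in> S2 p d" and "qexp p f \<noteq> 3"
  shows "relator p d f n s (U4 p) (\<lambda>j. unitri_mod p (K j)) =
    umat p 0 0 0 (pair_comm_sum comm13 d K) (pair_comm_sum comm24 d K)
      (itcomm_corner n K + pair_comm_sum comm14 d K)"
proof -
  have p: "p \<ge> 2" using prime_ge_2_nat[OF assms(1)] .
  show ?thesis
    using U4_pow_qexp[OF assms(1,4,5,7) unitri_mod_in_carrier[OF p]]
    by (simp add: U4_relator[OF p assms(2,3,6)] U4_one U4_mult[OF p])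
qed

lemma qexp_eq_3_imp_p_eq_3:
  assumes "Factorial_Ring.prime p" and "qexp p f = 3"
  shows "p = 3"
proof (cases f)
  case (enat k)
  then have "p ^ k = 3" using assms(2) by (simp add: qexp_def)
  then have "k \<noteq> 0" by (cases k) auto
  then have "p dvd 3" using \<open>p ^ k = 3\<close> dvd_power[of k p] by simp
  then show ?thesis using prime_nat_iff[of 3] prime_ge_2_nat[OF assms(1)] by auto
qed (use assms(2) in \<open>simp add: qexp_def\<close>)

lemma U4_cube:
  assumes "M \<in> carrier (U4 3)"
  shows "M [^]\<^bsub>U4 3\<^esub> (3::nat) = umat 3 0 0 0 0 0 (M 0 1 * M 1 2 * M 2 3)"
proof -
  have "(3::nat) choose 2 = 3" "(3::nat) choose 3 = 1" by (simp_all add: eval_nat_numeral)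
  with assms show ?thesis
    by (subst unitri4_eq_umat(1)[of M 3]) (simp_all add: U4_pow_umat umat_eq_iff mod_simps algebra_simps)
qed

section \<open>Lifting solutions from U4/Z to U4\<close>

definition same_superdiag :: "nat \<Rightarrow> (nat \<Rightarrow> mat) \<Rightarrow> (nat \<Rightarrow> mat) \<Rightarrow> bool" where
  "same_superdiag d K K' \<longleftrightarrow> (\<forall>j\<in>{1..d}. K' j 0 1 = K j 0 1 \<and> K' j 1 2 = K j 1 2 \<and> K' j 2 3 = K j 2 3)"

lemma entries_match_iff_superdiag:
  "entries_match d \<psi> g \<longleftrightarrow>
     (\<forall>j\<in>{1..d}. g j 0 1 = \<psi> 1 j 0 0 \<and> g j 1 2 = \<psi> 2 j 0 0 \<and> g j 2 3 = \<psi> 3 j 0 0)"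
proof -
  have "{1..3::nat} = {1, 2, 3}" by auto
  then show ?thesis by (auto simp: entries_match_def)
qed

lemma entries_match_same_superdiag:
  "entries_match d \<psi> g \<Longrightarrow> same_superdiag d g h \<Longrightarrow> entries_match d \<psi> h"
  by (simp add: entries_match_iff_superdiag same_superdiag_def)

lemma entries_match_superdiag_entry:
  "entries_match d (\<lambda>i. superdiag_entry (i - 1) \<circ> g) h \<longleftrightarrow> same_superdiag d g h"
  by (simp add: entries_match_iff_superdiag same_superdiag_def superdiag_entry_def numeral_2_eq_2 numeral_3_eq_3)

lemma same_superdiag_unitri_mod:
  assumes "g \<in> {1..d} \<rightarrow> carrier (U4 p)" and "same_superdiag d g K"
  shows "same_superdiag d g (\<lambda>j. unitri_mod p (K j))"
  unfolding same_superdiag_def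
proof
  fix j assume "j \<in> {1..d}"
  then have "g j \<in> unitri4 p" "K j 0 1 = g j 0 1" "K j 1 2 = g j 1 2" "K j 2 3 = g j 2 3"
    using assms unfolding same_superdiag_def by auto
  then show "unitri_mod p (K j) 0 1 = g j 0 1 \<and> unitri_mod p (K j) 1 2 = g j 1 2 \<and> unitri_mod p (K j) 2 3 = g j 2 3"
    using unitri4_eq_umat(2-4)[of "g j" p] by (simp add: unitri_mod_def)
qed

lemma same_superdiag_comm_terms:
  assumes "same_superdiag d K K'" and "d \<ge> 2"
  shows "pair_comm_sum comm13 d K' = pair_comm_sum comm13 d K"
    and "pair_comm_sum comm24 d K' = pair_comm_sum comm24 d K"
    and "itcomm_corner n K' = itcomm_corner n K"
proof -
  have "K' j 0 1 = K j 0 1 \<and> K' j 1 2 = K j 1 2 \<and> K' j 2 3 = K j 2 3" if "j \<in> {1..d}" for j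
    using assms(1) that unfolding same_superdiag_def by blast
  then have "K' (2 * i) 0 1 = K (2 * i) 0 1" "K' (2 * i) 1 2 = K (2 * i) 1 2" "K' (2 * i) 2 3 = K (2 * i) 2 3"
    "K' (2 * i + 1) 0 1 = K (2 * i + 1) 0 1" "K' (2 * i + 1) 1 2 = K (2 * i + 1) 1 2"
    "K' (2 * i + 1) 2 3 = K (2 * i + 1) 2 3" if "i \<in> {1..<(d + 1) div 2}" for i
    using that by auto
  then show "pair_comm_sum comm13 d K' = pair_comm_sum comm13 d K"
    "pair_comm_sum comm24 d K' = pair_comm_sum comm24 d K"
    by (auto simp: pair_comm_sum_def comm13_def comm24_def intro!: sum.cong)
  show "itcomm_corner n K' = itcomm_corner n K"
    using \<open>\<And>j. j \<in> {1..d} \<Longrightarrow> _\<close>[of 1] \<open>\<And>j. j \<in> {1..d} \<Longrightarrow> _\<close>[of 2] assms(2)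
    by (simp add: itcomm_corner_def comm13_def comm24_def)
qed

definition add_superdiag2 :: "mat \<Rightarrow> int \<Rightarrow> int \<Rightarrow> mat" where
  "add_superdiag2 M u v = M(0 := (M 0)(2 := M 0 2 + u), 1 := (M 1)(3 := M 1 3 + v))"

lemma add_superdiag2_apply [simp]:
  "add_superdiag2 M u v i j =
     (if i = 0 \<and> j = 2 then M 0 2 + u else if i = 1 \<and> j = 3 then M 1 3 + v else M i j)"
  by (simp add: add_superdiag2_def)

lemma comm14_add_superdiag2:
  "comm14 A (add_superdiag2 B u v) = comm14 A B + (A 0 1 * v - u * A 2 3)"
  "comm14 (add_superdiag2 A u v) B = comm14 A B - (B 0 1 * v - u * B 2 3)"
  by (simp_all add: comm14_def algebra_simps)

lemma sum_update_one:
  fixes f g :: "'a \<Rightarrow> 'b::ab_group_add"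
  assumes "finite A" and "a \<in> A" and "\<And>i. i \<in> A \<Longrightarrow> i \<noteq> a \<Longrightarrow> g i = f i"
  shows "sum g A = sum f A + (g a - f a)"
proof -
  have "sum g (A - {a}) = sum f (A - {a})"
    using assms(3) by (intro sum.cong) auto
  then show ?thesis
    using sum.remove[OF assms(1,2), of g] sum.remove[OF assms(1,2), of f] by simp
qed

lemma coprime_solve_mod:
  fixes a c m :: int
  assumes "coprime a m"
  obtains t where "(a * t) mod m = c mod m"
proof -
  obtain u v where uv: "u * a + v * m = 1"
    using bezout_int[of a m] assms by auto
  have "u * a = 1 - v * m" using uv by linarith
  have "a * (u * c) = (u * a) * c" by (simp add: ac_simps)
  also have "\<dots> = c + m * (- v * c)" unfolding \<open>u * a = 1 - v * m\<close> by (simp add: algebra_simps)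
  finally have "(a * (u * c)) mod m = c mod m" by (simp only: mod_mult_self2)
  then show thesis by (rule that)
qed

lemma prime_linear_combination_mod:
  fixes \<alpha> \<beta> c :: int
  assumes "Factorial_Ring.prime p" and "\<not> (int p dvd \<alpha> \<and> int p dvd \<beta>)"
  obtains u v where "(\<alpha> * v - \<beta> * u) mod p = c mod p"
proof -
  have prime: "Factorial_Ring.prime (int p)" using assms(1) by simp
  show thesis
  proof (cases "int p dvd \<alpha>")
    case False
    then have "coprime \<alpha> (int p)"
      using prime_imp_coprime[OF prime] coprime_commute by blast
    then obtain t where "(\<alpha> * t) mod p = c mod p" by (rule coprime_solve_mod)
    then show thesis by (intro that[where u = 0 and v = t]) simp
  next
    case True
    then have "coprime \<beta> (int p)"
      using assms(2) prime_imp_coprime[OF prime] coprime_commute by blast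
    then obtain t where "(\<beta> * t) mod p = (- c) mod p" by (rule coprime_solve_mod)
    then have "(- (\<beta> * t)) mod p = (- (- c)) mod p" by (rule mod_minus_cong)
    then show thesis by (intro that[where u = t and v = 0]) simp
  qed
qed

lemma pair_comm_sum_comm14_adjust:
  assumes "Factorial_Ring.prime p" and "odd d" and "j0 \<in> {2..d}"
    and "\<not> (int p dvd K j0 0 1 \<and> int p dvd K j0 2 3)"
  obtains K' where "same_superdiag d K K'"
    and "pair_comm_sum comm14 d K' mod p = (pair_comm_sum comm14 d K + c) mod p"
proof -
  define i0 where "i0 = j0 div 2"
  define jp where "jp = (if even j0 then j0 + 1 else j0 - 1)"
  define \<sigma> :: int where "\<sigma> = (if even j0 then 1 else - 1)"
  \<comment> \<open>shifting the (1,3), (2,4) entries of the partner jp of j0 by u, v moves the corner of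
    the commutator of the pair i0 by \<sigma> times the linear form in uv\<close>
  obtain u v where uv: "(K j0 0 1 * v - K j0 2 3 * u) mod p = (\<sigma> * c) mod p"
    using prime_linear_combination_mod[OF assms(1,4)] .
  define K' where "K' = K(jp := add_superdiag2 (K jp) u v)"
  have i0: "i0 \<in> {1..<(d + 1) div 2}"
    using assms(2,3) unfolding i0_def by (auto elim!: oddE)
  have pair: "even j0 \<Longrightarrow> 2 * i0 = j0 \<and> 2 * i0 + 1 = jp" "odd j0 \<Longrightarrow> 2 * i0 = jp \<and> 2 * i0 + 1 = j0"
    unfolding i0_def jp_def by (auto elim!: evenE oddE)
  have "comm14 (K' (2 * i0)) (K' (2 * i0 + 1)) =
      comm14 (K (2 * i0)) (K (2 * i0 + 1)) + \<sigma> * (K j0 0 1 * v - K j0 2 3 * u)"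
  proof (cases "even j0")
    case True
    with pair have "2 * i0 = j0" "2 * i0 + 1 = jp" by auto
    then show ?thesis unfolding K'_def using True by (auto simp: \<sigma>_def comm14_add_superdiag2)
  next
    case False
    with pair have "2 * i0 = jp" "2 * i0 + 1 = j0" by auto
    then show ?thesis unfolding K'_def using False by (auto simp: \<sigma>_def comm14_add_superdiag2)
  qed
  moreover have "comm14 (K' (2 * i)) (K' (2 * i + 1)) = comm14 (K (2 * i)) (K (2 * i + 1))"
    if "i \<noteq> i0" for i
    using that pair by (cases "even j0") (auto simp: K'_def)
  ultimately have sum: "pair_comm_sum comm14 d K' =
      pair_comm_sum comm14 d K + \<sigma> * (K j0 0 1 * v - K j0 2 3 * u)"
    unfolding pair_comm_sum_def using i0 by (subst sum_update_one[where a = i0]) auto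
  have "(\<sigma> * (K j0 0 1 * v - K j0 2 3 * u)) mod p = c mod p"
    using mod_mult_cong[OF refl uv, of \<sigma>] by (simp add: \<sigma>_def)
  then have "pair_comm_sum comm14 d K' mod p = (pair_comm_sum comm14 d K + c) mod p"
    unfolding sum by (rule mod_add_cong[OF refl])
  moreover have "same_superdiag d K K'"
    by (simp add: same_superdiag_def K'_def)
  ultimately show thesis by (rule that[rotated])
qed

lemma U4Z_solution_lifts:
  assumes "Factorial_Ring.prime p" and "odd d" and "d \<ge> 3" and "n \<ge> 2" and "f \<ge> 1"
    and "p = 2 \<longrightarrow> f \<ge> 2" and "s \<in> S2 p d" and "qexp p f \<noteq> 3"
    and "pres_hom p d f n s (U4Z p) g"
  obtains h where "pres_hom p d f n s (U4 p) h" and "same_superdiag d g h"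
proof -
  have p: "p \<ge> 2" using prime_ge_2_nat[OF assms(1)] .
  have gZ: "g \<in> {1..d} \<rightarrow> carrier (U4Z p)" and relZ: "relator p d f n s (U4Z p) g = \<one>\<^bsub>U4Z p\<^esub>"
    using assms(9) unfolding pres_hom_def by auto
  have g: "g \<in> {1..d} \<rightarrow> carrier (U4 p)" using gZ U4Z_carrier_subset by blast
  note coords = relator_U4_coords[OF assms(1,3,4,5,6,7,8)]
  have "umat p 0 0 0 (pair_comm_sum comm13 d g) (pair_comm_sum comm24 d g) 0 = umat p 0 0 0 0 0 0"
    using drop_corner_relator[OF p assms(3,7) gZ, of f n] relZ
    by (simp add: relator_U4_unitri_mod[OF p assms(3,7) g] coords drop_corner_umat U4Z_one)
  then have comm13_24: "pair_comm_sum comm13 d g mod p = 0" "pair_comm_sum comm24 d g mod p = 0"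
    by (simp_all add: umat_eq_iff)
  show thesis
  proof (cases "\<exists>j0\<in>{2..d}. \<not> (int p dvd g j0 0 1 \<and> int p dvd g j0 2 3)")
    case True
    then obtain j0 where j0: "j0 \<in> {2..d}" "\<not> (int p dvd g j0 0 1 \<and> int p dvd g j0 2 3)" by blast
    obtain K where K: "same_superdiag d g K" and K14: "pair_comm_sum comm14 d K mod p =
        (pair_comm_sum comm14 d g + - (itcomm_corner n g + pair_comm_sum comm14 d g)) mod p"
      by (rule pair_comm_sum_comm14_adjust[where K = g, OF assms(1,2) j0])
    have "(itcomm_corner n g + pair_comm_sum comm14 d K) mod p = 0"
      using mod_add_cong[OF refl K14, of "itcomm_corner n g"] by simp
    then have "relator p d f n s (U4 p) (\<lambda>j. unitri_mod p (K j)) = \<one>\<^bsub>U4 p\<^esub>"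
      using comm13_24 assms(3) by (simp add: coords same_superdiag_comm_terms[OF K] U4_one umat_eq_iff)
    moreover have "(\<lambda>j. unitri_mod p (K j)) \<in> {1..d} \<rightarrow> carrier (U4 p)"
      using unitri_mod_in_carrier[OF p] by blast
    ultimately show thesis
      using that same_superdiag_unitri_mod[OF g K] unfolding pres_hom_def by blast
  next
    case False
    have "g j 0 1 = 0 \<and> g j 2 3 = 0" if "j \<in> {2..d}" for j
      using False that g unitri4_entry_dvd_eq_0[of "g j" p] by fastforce
    then have "relator p d f n s (U4 p) g = g 1 [^]\<^bsub>U4 p\<^esub> qexp p f"
      by (intro relator_U4_eq_pow[OF p assms(3,4,7) g]) blast
    also have "\<dots> = \<one>\<^bsub>U4 p\<^esub>"
      using g assms(3) by (intro U4_pow_qexp[OF assms(1,5,6,8)]) auto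
    finally show thesis
      using that g by (simp add: pres_hom_def same_superdiag_def del: U4_carrier)
  qed
qed

lemma q3_lift_obstruction:
  assumes "Factorial_Ring.prime p" and "d \<ge> 3" and "n \<ge> 2" and "s \<in> S2 p d" and "qexp p f = 3"
  obtains \<psi> where "\<forall>i\<in>{1..3}. pres_hom p d f n s (Fp_grp p) (\<psi> i)"
    and "\<exists>g. pres_hom p d f n s (U4Z p) g \<and> entries_match d \<psi> g"
    and "\<not> (\<exists>h. pres_hom p d f n s (U4 p) h \<and> entries_match d \<psi> h)"
proof -
  have p3: "p = 3" by (rule qexp_eq_3_imp_p_eq_3[OF assms(1,5)])
  then have p: "p \<ge> 2" by simp
  have s: "s \<in> free_pro_p p d" using assms(4) by (simp add: S2_def)
  define g0 where "g0 j = (if j = 1 then umat p 1 1 1 0 0 0 else umat p 0 0 0 0 0 0)" for j :: nat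
  define \<psi> :: "nat \<Rightarrow> nat \<Rightarrow> mat" where "\<psi> = (\<lambda>i. superdiag_entry (i - 1) \<circ> g0)"
  have g0: "g0 \<in> {1..d} \<rightarrow> carrier (U4 p)"
    using umat_in_unitri4[OF p] by (simp add: g0_def)
  have obstruction: "relator p d f n s (U4 p) h = umat p 0 0 0 0 0 1"
    if h: "h \<in> {1..d} \<rightarrow> carrier (U4 p)" and "same_superdiag d g0 h" for h
  proof -
    have "h j 0 1 = g0 j 0 1 \<and> h j 1 2 = g0 j 1 2 \<and> h j 2 3 = g0 j 2 3" if "j \<in> {1..d}" for j
      using \<open>same_superdiag d g0 h\<close> that unfolding same_superdiag_def by blast
    then have "\<forall>j\<in>{2..d}. h j 0 1 = 0 \<and> h j 2 3 = 0" and "h 1 0 1 = 1" "h 1 1 2 = 1" "h 1 2 3 = 1"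
      using assms(2) p3 by (auto simp: g0_def)
    moreover have "h 1 \<in> carrier (U4 3)" using h assms(2) p3 by auto
    ultimately have "h 1 [^]\<^bsub>U4 p\<^esub> qexp p f = umat p 0 0 0 0 0 1"
      using p3 assms(5) U4_cube[of "h 1"] by simp
    then show ?thesis
      using relator_U4_eq_pow[OF p assms(2,3,4) h] \<open>\<forall>j\<in>{2..d}. _\<close> by simp
  qed
  have rel_g0: "relator p d f n s (U4 p) g0 = umat p 0 0 0 0 0 1"
    by (rule obstruction[OF g0]) (simp add: same_superdiag_def)
  show thesis
  proof (rule that)
    show "\<forall>i\<in>{1..3}. pres_hom p d f n s (Fp_grp p) (\<psi> i)"
    proof
      fix i :: nat assume "i \<in> {1..3}"
      then have hom: "superdiag_entry (i - 1) \<in> hom (U4 p) (Fp_grp p)"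
        by (intro superdiag_entry_hom[OF p]) auto
      have "relator p d f n s (Fp_grp p) (\<psi> i) = superdiag_entry (i - 1) (relator p d f n s (U4 p) g0)"
        unfolding \<psi>_def
        by (rule relator_hom[OF fin_p_group_U4[OF p] fin_p_group_Fp[OF p] hom g0 s assms(2), symmetric])
      also have "\<dots> = superdiag_entry (i - 1) (umat p 0 0 0 0 0 1)"
        unfolding rel_g0 ..
      also have "\<dots> = \<one>\<^bsub>Fp_grp p\<^esub>"
      proof -
        have "i - 1 < 3" using \<open>i \<in> {1..3}\<close> by auto
        then show ?thesis unfolding superdiag_entry_def Fp_one by (simp add: umat_superdiag)
      qed
      finally have "relator p d f n s (Fp_grp p) (\<psi> i) = \<one>\<^bsub>Fp_grp p\<^esub>" .
      moreover have "\<psi> i \<in> {1..d} \<rightarrow> carrier (Fp_grp p)"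
      proof
        fix j assume "j \<in> {1..d}"
        then have "g0 j \<in> carrier (U4 p)" using g0 by (rule funcset_mem[rotated])
        then show "\<psi> i j \<in> carrier (Fp_grp p)"
          unfolding \<psi>_def o_def by (rule hom_in_carrier[OF hom])
      qed
      ultimately show "pres_hom p d f n s (Fp_grp p) (\<psi> i)"
        unfolding pres_hom_def by blast
    qed
    have "relator p d f n s (U4Z p) (drop_corner \<circ> g0) = drop_corner (relator p d f n s (U4 p) g0)"
      by (rule relator_hom[OF fin_p_group_U4[OF p] fin_p_group_U4Z[OF p] drop_corner_hom[OF p] g0 s assms(2),
            symmetric])
    then have "relator p d f n s (U4Z p) (drop_corner \<circ> g0) = \<one>\<^bsub>U4Z p\<^esub>"
      by (simp add: rel_g0 drop_corner_umat U4Z_one)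
    moreover have "drop_corner \<circ> g0 \<in> {1..d} \<rightarrow> carrier (U4Z p)"
      using g0 hom_in_carrier[OF drop_corner_hom[OF p]] by (auto simp: Pi_iff)
    moreover have "entries_match d \<psi> (drop_corner \<circ> g0)"
      unfolding \<psi>_def entries_match_superdiag_entry by (simp add: same_superdiag_def)
    ultimately show "\<exists>g. pres_hom p d f n s (U4Z p) g \<and> entries_match d \<psi> g"
      unfolding pres_hom_def by blast
    show "\<not> (\<exists>h. pres_hom p d f n s (U4 p) h \<and> entries_match d \<psi> h)"
      using obstruction p3 unfolding \<psi>_def entries_match_superdiag_entry
      by (auto simp: pres_hom_def U4_one umat_eq_iff)
  qed
qed

theorem proposition5p5:
  fixes p d n :: nat and f :: enat and s :: proword
  assumes "Factorial_Ring.prime p" and "odd d" and "d \<ge> 3" and "n \<ge> 2"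
    and "f \<ge> 1" and "p = 2 \<longrightarrow> f \<ge> 2"
    and "s \<in> S2 p d"
  shows "(\<forall>\<psi> :: nat \<Rightarrow> nat \<Rightarrow> mat.
            (\<forall>i\<in>{1..3}. pres_hom p d f n s (Fp_grp p) (\<psi> i)) \<longrightarrow>
            (\<exists>g. pres_hom p d f n s (U4Z p) g \<and> entries_match d \<psi> g) \<longrightarrow>
            (\<exists>g. pres_hom p d f n s (U4 p) g \<and> entries_match d \<psi> g))
         \<longleftrightarrow> qexp p f \<noteq> 3"
proof -
  have "\<exists>h. pres_hom p d f n s (U4 p) h \<and> entries_match d \<psi> h"
    if "qexp p f \<noteq> 3" and "pres_hom p d f n s (U4Z p) g" and "entries_match d \<psi> g" for \<psi> g
    using U4Z_solution_lifts[OF assms that(1,2)] entries_match_same_superdiag[OF that(3)] by metis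
  moreover have "\<exists>\<psi>. (\<forall>i\<in>{1..3}. pres_hom p d f n s (Fp_grp p) (\<psi> i)) \<and>
      (\<exists>g. pres_hom p d f n s (U4Z p) g \<and> entries_match d \<psi> g) \<and>
      \<not> (\<exists>h. pres_hom p d f n s (U4 p) h \<and> entries_match d \<psi> h)" if "qexp p f = 3"
    using q3_lift_obstruction[OF assms(1,3,4,7) that] by metis
  ultimately show ?thesis by blast
qed

end
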